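(* $\bigcup_k\mathfrak{L}(\mathrm{rtDVA}(k))\subseteq\mathsf{TISP}(n^3,n)$.
   Context: $\mathfrak{L}(A)$ denotes the class of languages recognized by machines of type $A$; the union ranges over $k\ge1$. $\mathsf{TISP}(n^3,n)$ is the class of languages decidable by a deterministic Turing machine that simultaneously uses time $O(n^3)$ and space $O(n)$ on inputs of length $n$. A real-time deterministic vector automaton of dimension $k$ ($\mathrm{rtDVA}(k)$) is a 6-tuple $(Q,\Sigma,\delta,q_0,Q_a,v)$ with finite state set $Q$, initial state $q_0$, accept states $Q_a$, initial row vector $v\in\mathbb{Q}^k$ (freely chosen), and $\delta:Q\times(\Sigma\cup\{\cent,\$\})\times\{=,\neq\}\to Q\times S$, $S$ the set of $k\times k$ rational matrices. The input $w$ is read as $\cent w\$$ left to right, one symbol per step; in state $q$ reading $\sigma$, with $\omega$ equal to "$=$" iff the first vector entry equals $1$, if $\delta(q,\sigma,\omega)=(q',M)$ the machine goes to $q'$ and multiplies its row vector on the right by $M$. Acceptance: after processing $\$$, the state is in $Q_a$ and the first vector entry equals $1$. *)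

theory Defs
  imports Complex_Main
begin

datatype 'a esym = Cent | Dollar | Sym 'a

text \<open>Vectors of dimension k are functions nat => rat (only indices < k matter),
  k x k matrices are functions nat => nat => rat (only indices < k matter).
  Index 0 is the first entry.\<close>
definition vmult :: "nat \<Rightarrow> (nat \<Rightarrow> rat) \<Rightarrow> (nat \<Rightarrow> nat \<Rightarrow> rat) \<Rightarrow> (nat \<Rightarrow> rat)" where
  "vmult k v M = (\<lambda>j. \<Sum>i<k. v i * M i j)"

record 'a dva =
  dva_states :: "nat set"
  dva_delta  :: "nat \<Rightarrow> 'a esym \<Rightarrow> bool \<Rightarrow> nat \<times> (nat \<Rightarrow> nat \<Rightarrow> rat)"
  dva_init   :: nat
  dva_acc    :: "nat set"
  dva_vec    :: "nat \<Rightarrow> rat"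

text \<open>Well-formedness of an rtDVA(k). The boolean argument of the transition
  function is True iff the first vector entry equals 1 (i.e. omega is "=").\<close>
definition rtDVA :: "nat \<Rightarrow> 'a dva \<Rightarrow> bool" where
  "rtDVA k A \<longleftrightarrow> k \<ge> 1 \<and> finite (dva_states A) \<and> dva_init A \<in> dva_states A
     \<and> dva_acc A \<subseteq> dva_states A
     \<and> (\<forall>q\<in>dva_states A. \<forall>\<sigma> b. fst (dva_delta A q \<sigma> b) \<in> dva_states A)"

definition dva_step :: "nat \<Rightarrow> 'a dva \<Rightarrow> nat \<times> (nat \<Rightarrow> rat) \<Rightarrow> 'a esym \<Rightarrow> nat \<times> (nat \<Rightarrow> rat)" where
  "dva_step k A c \<sigma> =
     (case dva_delta A (fst c) \<sigma> (snd c 0 = 1) of (q', M) \<Rightarrow> (q', vmult k (snd c) M))"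

definition dva_run :: "nat \<Rightarrow> 'a dva \<Rightarrow> 'a list \<Rightarrow> nat \<times> (nat \<Rightarrow> rat)" where
  "dva_run k A w = foldl (dva_step k A) (dva_init A, dva_vec A) ([Cent] @ map Sym w @ [Dollar])"

definition dva_lang :: "nat \<Rightarrow> 'a dva \<Rightarrow> 'a list set" where
  "dva_lang k A = {w. fst (dva_run k A w) \<in> dva_acc A \<and> snd (dva_run k A w) 0 = 1}"

definition rtDVA_langs :: "nat \<Rightarrow> 'a list set set" where
  "rtDVA_langs k = {L. \<exists>A. rtDVA k A \<and> dva_lang k A = L}"

datatype 'a tsym = Blank | Inp 'a | Wk nat

record 'a tm =
  tm_k     :: nat
  tm_Q     :: "nat set"
  tm_Gamma :: "'a tsym set"
  tm_q0    :: nat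
  tm_acc   :: nat
  tm_rej   :: nat
  tm_delta :: "nat \<Rightarrow> 'a tsym list \<Rightarrow> nat \<times> 'a tsym list \<times> int list"

definition tm_wf :: "'a tm \<Rightarrow> bool" where
  "tm_wf M \<longleftrightarrow> tm_k M \<ge> 1 \<and> finite (tm_Q M) \<and> finite (tm_Gamma M)
     \<and> Blank \<in> tm_Gamma M \<and> range Inp \<subseteq> tm_Gamma M
     \<and> tm_q0 M \<in> tm_Q M \<and> tm_acc M \<in> tm_Q M \<and> tm_rej M \<in> tm_Q M \<and> tm_acc M \<noteq> tm_rej M
     \<and> (\<forall>q \<in> tm_Q M - {tm_acc M, tm_rej M}. \<forall>gs.
          length gs = tm_k M \<and> set gs \<subseteq> tm_Gamma M \<longrightarrow>
          (case tm_delta M q gs of (q', ws, ds) \<Rightarrow>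
             q' \<in> tm_Q M \<and> length ws = tm_k M \<and> set ws \<subseteq> tm_Gamma M
             \<and> length ds = tm_k M \<and> set ds \<subseteq> {-1, 0, 1}))"

type_synonym 'a tm_config = "nat \<times> (int \<Rightarrow> 'a tsym) list \<times> int list"

definition tm_step :: "'a tm \<Rightarrow> 'a tm_config \<Rightarrow> 'a tm_config" where
  "tm_step M c = (case c of (q, ts, hs) \<Rightarrow>
     if q = tm_acc M \<or> q = tm_rej M then c
     else (case tm_delta M q [(ts ! i) (hs ! i). i \<leftarrow> [0..<tm_k M]] of (q', ws, ds) \<Rightarrow>
       (q', [(ts ! i)(hs ! i := ws ! i). i \<leftarrow> [0..<tm_k M]],
            [hs ! i + ds ! i. i \<leftarrow> [0..<tm_k M]])))"

definition tm_init :: "'a tm \<Rightarrow> 'a list \<Rightarrow> 'a tm_config" where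
  "tm_init M w = (tm_q0 M,
     (\<lambda>p. if 0 \<le> p \<and> p < int (length w) then Inp (w ! nat p) else Blank)
       # replicate (tm_k M - 1) (\<lambda>_. Blank),
     replicate (tm_k M) 0)"

definition tm_cfg :: "'a tm \<Rightarrow> 'a list \<Rightarrow> nat \<Rightarrow> 'a tm_config" where
  "tm_cfg M w t = (tm_step M ^^ t) (tm_init M w)"

definition tm_decides_within :: "'a tm \<Rightarrow> 'a list set \<Rightarrow> (nat \<Rightarrow> nat) \<Rightarrow> (nat \<Rightarrow> nat) \<Rightarrow> bool" where
  "tm_decides_within M L T S \<longleftrightarrow> (\<forall>w. \<exists>t. t \<le> T (length w)
     \<and> fst (tm_cfg M w t) \<in> {tm_acc M, tm_rej M}
     \<and> (fst (tm_cfg M w t) = tm_acc M \<longleftrightarrow> w \<in> L)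
     \<and> card {(i, snd (snd (tm_cfg M w s)) ! i) | s i. s \<le> t \<and> i < tm_k M} \<le> S (length w))"

definition TISP :: "(nat \<Rightarrow> nat) \<Rightarrow> (nat \<Rightarrow> nat) \<Rightarrow> 'a list set set" where
  "TISP T S = {L. \<exists>M c. tm_wf M \<and> tm_decides_within M L (\<lambda>n. c * T n + c) (\<lambda>n. c * S n + c)}"

end

theory Submission
  imports Defs "HOL-Library.Countable"
begin

text \<open>
  Clearing denominators, the vector of the automaton after t steps has entries u i / u k for an
  integer vector u with entries u 0, ..., u k, and each step multiplies u by a fixed integer
  matrix: the transition matrix times the common denominator D, extended by D on the coordinate k.
  So the entries of u have O(n) digits in a base B that depends only on the automaton. The
  machine keeps u on its work tape as a little-endian sequence of cells; a cell holds one digit of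
  each of the 2(k + 1) nonnegative parts of the entries (the positive part of u i at index 2 i,
  the negative part at 2 i + 1). Multiplying by the matrix, split likewise into one with
  nonnegative entries, is a single left-to-right sweep with bounded carries, during which the
  equation u 0 = u k, i.e. that the first vector entry is 1, is tested digit by digit. One sweep
  and one return per input symbol over at most n + 2 cells take time O(n^2) and space O(n).
\<close>

section \<open>Carry sweeps over vectors of digits\<close>

fun digits_val :: "nat \<Rightarrow> nat list list \<Rightarrow> nat \<Rightarrow> nat" where
  "digits_val B [] i = 0"
| "digits_val B (ds # dss) i = ds ! i + B * digits_val B dss i"

definition signed_digit :: "nat list \<Rightarrow> nat \<Rightarrow> int" where
  "signed_digit ds i = int (ds ! (2 * i)) - int (ds ! (2 * i + 1))"

definition signed_val :: "nat \<Rightarrow> nat list list \<Rightarrow> nat \<Rightarrow> int" where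
  "signed_val B dss i = int (digits_val B dss (2 * i)) - int (digits_val B dss (2 * i + 1))"

definition vecs_below :: "nat \<Rightarrow> nat \<Rightarrow> nat list set" where
  "vecs_below m B = {ds. length ds = m \<and> (\<forall>d\<in>set ds. d < B)}"

definition cell_sum :: "nat \<Rightarrow> (nat \<Rightarrow> nat \<Rightarrow> nat) \<Rightarrow> nat list \<Rightarrow> nat list \<Rightarrow> nat list" where
  "cell_sum m G ds cs = map (\<lambda>j. (\<Sum>i<m. ds ! i * G i j) + cs ! j) [0..<m]"

text \<open>Besides the carries cs, the state tests whether the signed components 0 and k of the output
  agree: e is the pending carry of their difference, and fl records that all its digits so far
  vanished.\<close>
definition carry_step :: "nat \<Rightarrow> nat \<Rightarrow> nat \<Rightarrow> (nat \<Rightarrow> nat \<Rightarrow> nat) \<Rightarrow> nat list \<times> int \<times> bool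
    \<Rightarrow> nat list \<Rightarrow> nat list \<times> nat list \<times> int \<times> bool" where
  "carry_step m B k G st ds = (case st of (cs, e, fl) \<Rightarrow>
     let s = cell_sum m G ds cs; nd = map (\<lambda>x. x mod B) s;
         z = signed_digit nd 0 - signed_digit nd k + e
     in (nd, map (\<lambda>x. x div B) s, z div int B, fl \<and> z mod int B = 0))"

fun sweep :: "nat \<Rightarrow> nat \<Rightarrow> nat \<Rightarrow> (nat \<Rightarrow> nat \<Rightarrow> nat) \<Rightarrow> nat list \<times> int \<times> bool
    \<Rightarrow> nat list list \<Rightarrow> nat list list \<times> nat list \<times> int \<times> bool" where
  "sweep m B k G st [] = ([], st)"
| "sweep m B k G st (ds # dss) =
     (let (nd, st') = carry_step m B k G st ds; (out, st'') = sweep m B k G st' dss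
      in (nd # out, st''))"

lemma digits_val_append:
  "digits_val B (xs @ ys) i = digits_val B xs i + B ^ length xs * digits_val B ys i"
  by (induction xs) (auto simp: algebra_simps)

lemma signed_val_Cons:
  "signed_val B (ds # dss) i = signed_digit ds i + int B * signed_val B dss i"
  by (simp add: signed_val_def signed_digit_def algebra_simps)

lemma vecs_below_nth: "ds \<in> vecs_below m B \<Longrightarrow> i < m \<Longrightarrow> ds ! i < B"
  unfolding vecs_below_def by (metis (mono_tags) mem_Collect_eq nth_mem)

lemma finite_vecs_below: "finite (vecs_below m B)"
proof -
  have "vecs_below m B \<subseteq> {xs. set xs \<subseteq> {..<B} \<and> length xs = m}"
    by (auto simp: vecs_below_def)
  then show ?thesis by (rule finite_subset) (rule finite_lists_length_eq, simp)
qed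

lemma carry_step_eq:
  "carry_step m B k G (cs, e, fl) ds = (nd, cs', e', fl') \<longleftrightarrow>
     nd = map (\<lambda>x. x mod B) (cell_sum m G ds cs) \<and> cs' = map (\<lambda>x. x div B) (cell_sum m G ds cs) \<and>
     e' = (signed_digit nd 0 - signed_digit nd k + e) div int B \<and>
     fl' = (fl \<and> (signed_digit nd 0 - signed_digit nd k + e) mod int B = 0)"
  by (auto simp: carry_step_def Let_def)

lemma sweep_snoc:
  "sweep m B k G st (dss @ [ds]) =
     (let (out, st') = sweep m B k G st dss; (nd, st'') = carry_step m B k G st' ds in (out @ [nd], st''))"
  by (induction dss arbitrary: st) (auto simp: split_beta)

lemma sweep_length: "length (fst (sweep m B k G st dss)) = length dss"
  by (induction dss arbitrary: st) (auto simp: split_beta)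

lemma sweep_ConsE:
  assumes "sweep m B k G st (ds # dss) = (out, st')"
  obtains nd st1 out1 where "carry_step m B k G st ds = (nd, st1)"
    "sweep m B k G st1 dss = (out1, st')" "out = nd # out1"
proof -
  obtain nd st1 where step: "carry_step m B k G st ds = (nd, st1)" by (metis surj_pair)
  obtain out1 st2 where rest: "sweep m B k G st1 dss = (out1, st2)" by (metis surj_pair)
  show thesis using assms step rest by (intro that[OF step]) auto
qed

lemma sweep_digits_val:
  assumes "sweep m B k G (cs, e, fl) dss = (out, cs', e', fl')" "length cs = m" "j < m"
  shows "(\<Sum>i<m. digits_val B dss i * G i j) + cs ! j = digits_val B out j + B ^ length dss * cs' ! j"
  using assms(1,2)
proof (induction dss arbitrary: cs e fl out)
  case Nil
  then show ?case by simp
next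
  case (Cons ds dss)
  obtain nd cs1 e1 fl1 out1 where step: "carry_step m B k G (cs, e, fl) ds = (nd, cs1, e1, fl1)"
    and rest: "sweep m B k G (cs1, e1, fl1) dss = (out1, cs', e', fl')" and out: "out = nd # out1"
    using Cons.prems(1) by (elim sweep_ConsE) auto
  have "length cs1 = m" using step by (simp add: carry_step_eq cell_sum_def)
  note IH = Cons.IH[OF rest this]
  have "cell_sum m G ds cs ! j = nd ! j + B * cs1 ! j"
    using step assms(3) by (simp add: carry_step_eq cell_sum_def)
  then have digit: "(\<Sum>i<m. ds ! i * G i j) + cs ! j = nd ! j + B * cs1 ! j"
    using assms(3) by (simp add: cell_sum_def)
  have "(\<Sum>i<m. digits_val B (ds # dss) i * G i j) + cs ! j
      = (\<Sum>i<m. ds ! i * G i j) + cs ! j + B * (\<Sum>i<m. digits_val B dss i * G i j)"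
    by (simp add: distrib_right sum.distrib sum_distrib_left mult.assoc)
  also have "\<dots> = nd ! j + B * ((\<Sum>i<m. digits_val B dss i * G i j) + cs1 ! j)"
    using digit by (simp add: algebra_simps)
  also have "\<dots> = digits_val B out j + B ^ length (ds # dss) * cs' ! j"
    using IH out by (simp add: algebra_simps)
  finally show ?case .
qed

lemma sweep_zero_test:
  assumes "sweep m B k G (cs, e, fl) dss = (out, cs', e', fl')" "0 < B"
  shows "(e' = 0 \<and> fl') \<longleftrightarrow> fl \<and> signed_val B out 0 - signed_val B out k + e = 0"
  using assms(1)
proof (induction dss arbitrary: cs e fl out)
  case Nil
  then show ?case by (auto simp: signed_val_def)
next
  case (Cons ds dss)
  obtain nd cs1 e1 fl1 out1 where step: "carry_step m B k G (cs, e, fl) ds = (nd, cs1, e1, fl1)"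
    and rest: "sweep m B k G (cs1, e1, fl1) dss = (out1, cs', e', fl')" and out: "out = nd # out1"
    using Cons.prems by (elim sweep_ConsE) auto
  define z where "z = signed_digit nd 0 - signed_digit nd k + e"
  define Z where "Z = signed_val B out1 0 - signed_val B out1 k"
  have e1: "e1 = z div int B" and fl1: "fl1 \<longleftrightarrow> fl \<and> z mod int B = 0"
    using step by (simp_all add: carry_step_eq z_def)
  have carry: "(z mod int B = 0 \<and> Z + z div int B = 0) \<longleftrightarrow> z + int B * Z = 0"
  proof
    assume "z mod int B = 0 \<and> Z + z div int B = 0"
    then show "z + int B * Z = 0" by (metis add.commute add.right_neutral minus_add_cancel
          mult_div_mod_eq mult_minus_right)
  next
    assume "z + int B * Z = 0"
    then have "z = int B * (- Z)" by simp
    moreover have "int B * (- Z) div int B = - Z"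
      by (rule nonzero_mult_div_cancel_left) (use assms(2) in simp)
    ultimately show "z mod int B = 0 \<and> Z + z div int B = 0" by simp
  qed
  have "signed_val B out 0 - signed_val B out k + e = z + int B * Z"
    by (simp add: out signed_val_Cons z_def Z_def algebra_simps)
  then show ?case using Cons.IH[OF rest] e1 fl1 carry by (simp add: Z_def)
qed

lemma cell_sum_le:
  assumes "ds \<in> vecs_below m B" "\<forall>j<m. (\<Sum>i<m. G i j) \<le> S" "j < m" "c \<le> S" "0 < B"
  shows "(\<Sum>i<m. ds ! i * G i j) + c \<le> B * S"
proof -
  have "ds ! i \<le> B - 1" if "i < m" for i
  proof -
    have "ds ! i < B" using assms(1) that by (rule vecs_below_nth)
    then show ?thesis by linarith
  qed
  then have "(\<Sum>i<m. ds ! i * G i j) \<le> (\<Sum>i<m. (B - 1) * G i j)"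
    by (intro sum_mono mult_right_mono) simp_all
  also have "\<dots> \<le> (B - 1) * S"
    using assms(2,3) by (simp add: sum_distrib_left[symmetric])
  finally show ?thesis using assms(4,5) by (cases B) auto
qed

lemma length_cell_sum [simp]: "length (cell_sum m G ds cs) = m"
  by (simp add: cell_sum_def)

lemma carry_step_bounded:
  assumes "ds \<in> vecs_below m B" "cs \<in> vecs_below m (Suc S)" "\<forall>j<m. (\<Sum>i<m. G i j) \<le> S" "0 < B"
    "carry_step m B k G (cs, e, fl) ds = (nd, cs', e', fl')"
  shows "nd \<in> vecs_below m B \<and> cs' \<in> vecs_below m (Suc S)"
proof -
  have carry: "cell_sum m G ds cs ! j div B \<le> S" if "j < m" for j
  proof -
    have "cs ! j \<le> S" using vecs_below_nth[OF assms(2) that] by simp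
    then have "cell_sum m G ds cs ! j \<le> B * S"
      using cell_sum_le[OF assms(1,3) that _ assms(4)] that by (simp add: cell_sum_def)
    then show ?thesis using div_le_mono[of _ "B * S" B] assms(4) by fastforce
  qed
  have "nd = map (\<lambda>x. x mod B) (cell_sum m G ds cs)" "cs' = map (\<lambda>x. x div B) (cell_sum m G ds cs)"
    using assms(5) by (simp_all add: carry_step_eq)
  then show ?thesis using assms(4) carry
    by (fastforce simp: vecs_below_def in_set_conv_nth less_Suc_eq_le)
qed

lemma carry_step_borrow_bounded:
  assumes "carry_step m B k G (cs, e, fl) ds = (nd, cs', e', fl')" "nd \<in> vecs_below m B"
    "2 * k + 1 < m" "\<bar>e\<bar> \<le> 2"
  shows "\<bar>e'\<bar> \<le> 2"
proof -
  define z where "z = signed_digit nd 0 - signed_digit nd k + e"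
  have digit: "\<bar>signed_digit nd i\<bar> \<le> int B - 1" if "2 * i + 1 < m" for i
  proof -
    have "nd ! (2 * i) < B" "nd ! (2 * i + 1) < B"
      using vecs_below_nth[OF assms(2)] that by simp_all
    then show ?thesis by (simp add: signed_digit_def abs_le_iff)
  qed
  have B: "int B > 0" using vecs_below_nth[OF assms(2), of 0] assms(3) by simp
  have "\<bar>signed_digit nd 0\<bar> \<le> int B - 1" "\<bar>signed_digit nd k\<bar> \<le> int B - 1"
    using digit assms(3) by simp_all
  then have "-2 * int B \<le> z" "z \<le> 2 * int B"
    using assms(4) unfolding z_def abs_le_iff by linarith+
  then have "(-2 * int B) div int B \<le> z div int B" "z div int B \<le> (2 * int B) div int B"
    using B by (meson zdiv_mono1)+
  moreover have "(-2 * int B) div int B = -2" "(2 * int B) div int B = 2"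
    using B by (simp_all only: nonzero_mult_div_cancel_right of_nat_0_less_iff less_irrefl)
  moreover have "e' = z div int B" using assms(1) by (simp add: carry_step_eq z_def)
  ultimately show ?thesis by simp
qed

lemma sweep_bounded:
  assumes "sweep m B k G (cs, e, fl) dss = (out, cs', e', fl')" "set dss \<subseteq> vecs_below m B"
    "cs \<in> vecs_below m (Suc S)" "\<forall>j<m. (\<Sum>i<m. G i j) \<le> S" "0 < B"
  shows "set out \<subseteq> vecs_below m B \<and> cs' \<in> vecs_below m (Suc S)"
  using assms(1-3)
proof (induction dss arbitrary: cs e fl out)
  case Nil
  then show ?case by simp
next
  case (Cons ds dss)
  obtain nd cs1 e1 fl1 out1 where step: "carry_step m B k G (cs, e, fl) ds = (nd, cs1, e1, fl1)"
    and rest: "sweep m B k G (cs1, e1, fl1) dss = (out1, cs', e', fl')" and out: "out = nd # out1"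
    using Cons.prems(1) by (elim sweep_ConsE) auto
  have "nd \<in> vecs_below m B \<and> cs1 \<in> vecs_below m (Suc S)"
    using carry_step_bounded[OF _ Cons.prems(3) assms(4,5) step] Cons.prems(2) by simp
  then show ?case using Cons.IH[OF rest] Cons.prems(2) out by simp
qed

text \<open>A trailing zero cell absorbs the final carry, so the sweep computes exactly the
  product of the numbers with the matrix G.\<close>
lemma sweep_multiplies:
  assumes "sweep m B k G (replicate m 0, 0, True) (dss @ [replicate m 0]) = (out, cs', e', fl')"
    "set dss \<subseteq> vecs_below m B" "\<forall>j<m. (\<Sum>i<m. G i j) \<le> S" "S < B"
  shows "set out \<subseteq> vecs_below m B" "length out = Suc (length dss)"
    "\<And>j. j < m \<Longrightarrow> digits_val B out j = (\<Sum>i<m. digits_val B dss i * G i j)"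
    "(e' = 0 \<and> fl') \<longleftrightarrow> signed_val B out 0 = signed_val B out k"
proof -
  have B: "0 < B" using assms(4) by simp
  have zeros: "replicate m 0 \<in> vecs_below m B" "replicate m 0 \<in> vecs_below m (Suc S)"
    using B by (auto simp: vecs_below_def)
  obtain out0 cs0 e0 fl0 where first: "sweep m B k G (replicate m 0, 0, True) dss = (out0, cs0, e0, fl0)"
    by (metis surj_pair)
  obtain nd st where last: "carry_step m B k G (cs0, e0, fl0) (replicate m 0) = (nd, st)"
    by (metis surj_pair)
  have "st = (cs', e', fl')" using assms(1) first last by (simp add: sweep_snoc)
  then have cs': "cs' = map (\<lambda>x. x div B) (cell_sum m G (replicate m 0) cs0)"
    using last by (simp add: carry_step_eq)
  have "cs0 \<in> vecs_below m (Suc S)"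
    using sweep_bounded[OF first assms(2) zeros(2) assms(3) B] by simp
  then have "cs0 ! j div B = 0" if "j < m" for j
    using vecs_below_nth[OF _ that] assms(4) by fastforce
  then have "cs' = replicate m 0" by (simp add: cs' list_eq_iff_nth_eq cell_sum_def)
  then show "digits_val B out j = (\<Sum>i<m. digits_val B dss i * G i j)" if "j < m" for j
    using sweep_digits_val[OF assms(1) _ that] that by (simp add: digits_val_append)
  show "set out \<subseteq> vecs_below m B"
    using sweep_bounded[OF assms(1) _ zeros(2) assms(3) B] assms(2) zeros(1) by simp
  show "length out = Suc (length dss)"
    using sweep_length[of m B k G "(replicate m 0, 0, True)" "dss @ [replicate m 0]"] assms(1) by simp
  show "(e' = 0 \<and> fl') \<longleftrightarrow> signed_val B out 0 = signed_val B out k"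
    using sweep_zero_test[OF assms(1) B] by simp
qed

definition split_matrix :: "(nat \<Rightarrow> nat \<Rightarrow> int) \<Rightarrow> nat \<Rightarrow> nat \<Rightarrow> nat" where
  "split_matrix E i j =
     (if even i = even j then nat (E (i div 2) (j div 2)) else nat (- E (i div 2) (j div 2)))"

definition split_vector :: "(nat \<Rightarrow> int) \<Rightarrow> nat \<Rightarrow> nat" where
  "split_vector u i = (if even i then nat (u (i div 2)) else nat (- u (i div 2)))"

lemma sum_split_even_odd: "(\<Sum>i<2 * K. f i) = (\<Sum>i<K. f (2 * i) + f (2 * i + 1))" for f :: "nat \<Rightarrow> 'b::comm_monoid_add"
  by (induction K) (simp_all add: sum.distrib add_ac)

lemma signed_val_split_matrix:
  assumes "\<And>j. j < 2 * K \<Longrightarrow> digits_val B dss' j = (\<Sum>i<2 * K. digits_val B dss i * split_matrix E i j)"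
    "j < K"
  shows "signed_val B dss' j = (\<Sum>i<K. signed_val B dss i * E i j)"
proof -
  define x where "x i = int (digits_val B dss i)" for i
  define g where "g i j = int (split_matrix E i j)" for i j
  have "signed_val B dss' j = (\<Sum>i<2 * K. x i * (g i (2 * j) - g i (2 * j + 1)))"
    using assms by (simp add: signed_val_def x_def g_def of_nat_sum sum_subtractf algebra_simps)
  also have "\<dots> = (\<Sum>i<K. x (2 * i) * (g (2 * i) (2 * j) - g (2 * i) (2 * j + 1))
      + x (2 * i + 1) * (g (2 * i + 1) (2 * j) - g (2 * i + 1) (2 * j + 1)))"
    by (rule sum_split_even_odd)
  also have "\<dots> = (\<Sum>i<K. signed_val B dss i * E i j)"
    by (rule sum.cong) (simp_all add: g_def split_matrix_def signed_val_def x_def algebra_simps)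
  finally show ?thesis .
qed

lemma signed_val_split_vector:
  "i < K \<Longrightarrow> signed_val B [map (split_vector u) [0..<2 * K]] i = u i"
  by (simp add: signed_val_def split_vector_def)

section \<open>Runs of a step function\<close>

definition run_within :: "('c \<Rightarrow> 'c) \<Rightarrow> ('c \<Rightarrow> bool) \<Rightarrow> nat \<Rightarrow> 'c \<Rightarrow> 'c \<Rightarrow> bool" where
  "run_within f P t c c' \<longleftrightarrow> (f ^^ t) c = c' \<and> (\<forall>s\<le>t. P ((f ^^ s) c))"

lemma run_within_0: "P c \<Longrightarrow> run_within f P 0 c c"
  by (simp add: run_within_def)

lemma run_within_Suc:
  assumes "P c" "run_within f P t (f c) c'"
  shows "run_within f P (Suc t) c c'"
proof -
  have "P ((f ^^ s) c)" if "s \<le> Suc t" for s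
    using assms that by (cases s) (auto simp: run_within_def funpow_Suc_right simp del: funpow.simps)
  then show ?thesis using assms(2) by (simp add: run_within_def funpow_Suc_right del: funpow.simps)
qed

lemma run_within_step: "P c \<Longrightarrow> f c = c' \<Longrightarrow> P c' \<Longrightarrow> run_within f P (Suc 0) c c'"
  by (simp add: run_within_Suc run_within_0)

lemma run_within_add:
  assumes "run_within f P a c c'" "run_within f P b c' c''"
  shows "run_within f P (a + b) c c''"
proof -
  have split: "(f ^^ (a + s)) c = (f ^^ s) c'" for s
    using assms(1) funpow_add[of s a f] by (simp add: run_within_def add.commute)
  have "P ((f ^^ s) c)" if "s \<le> a + b" for s
  proof (cases "s \<le> a")
    case False
    then show ?thesis using assms(2) split[of "s - a"] that by (simp add: run_within_def)
  qed (use assms(1) in \<open>simp add: run_within_def\<close>)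
  then show ?thesis using assms(2) split[of b] by (simp add: run_within_def)
qed

lemma run_within_mono: "run_within f P t c c' \<Longrightarrow> (\<And>x. P x \<Longrightarrow> Q x) \<Longrightarrow> run_within f Q t c c'"
  by (simp add: run_within_def)

section \<open>Two-tape machines\<close>

definition heads_within :: "int set \<Rightarrow> int set \<Rightarrow> 'a tm_config \<Rightarrow> bool" where
  "heads_within H0 H1 c \<longleftrightarrow> (\<exists>h0 h1. snd (snd c) = [h0, h1] \<and> h0 \<in> H0 \<and> h1 \<in> H1)"

lemma heads_within_mono:
  "heads_within H0 H1 c \<Longrightarrow> H0 \<subseteq> H0' \<Longrightarrow> H1 \<subseteq> H1' \<Longrightarrow> heads_within H0' H1' c"
  by (auto simp: heads_within_def)

lemma run_within_heads_mono:
  "run_within f (heads_within H0 H1) t c c' \<Longrightarrow> H0 \<subseteq> H0' \<Longrightarrow> H1 \<subseteq> H1' \<Longrightarrow>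
    run_within f (heads_within H0' H1') t c c'"
  by (erule run_within_mono) (auto elim: heads_within_mono)

lemma card_visited_le:
  assumes "tm_k M = 2" "\<forall>s\<le>t. heads_within H0 H1 (tm_cfg M w s)" "finite H0" "finite H1"
  shows "card {(i, snd (snd (tm_cfg M w s)) ! i) | s i. s \<le> t \<and> i < tm_k M} \<le> card H0 + card H1"
proof -
  have "{(i, snd (snd (tm_cfg M w s)) ! i) | s i. s \<le> t \<and> i < tm_k M} \<subseteq> {0} \<times> H0 \<union> {1} \<times> H1"
    using assms(1,2) by (fastforce simp: heads_within_def less_2_cases_iff)
  then have "card {(i, snd (snd (tm_cfg M w s)) ! i) | s i. s \<le> t \<and> i < tm_k M}
      \<le> card ({0::nat} \<times> H0 \<union> {1} \<times> H1)"
    using assms(3,4) by (intro card_mono) auto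
  also have "\<dots> \<le> card H0 + card H1"
    using card_Un_le[of "{0::nat} \<times> H0" "{1} \<times> H1"] by (simp add: card_cartesian_product)
  finally show ?thesis .
qed

definition input_tape :: "'a list \<Rightarrow> int \<Rightarrow> 'a tsym" where
  "input_tape w p = (if 0 \<le> p \<and> p < int (length w) then Inp (w ! nat p) else Blank)"

definition cell_tape :: "nat list list \<Rightarrow> int \<Rightarrow> 'a tsym" where
  "cell_tape cells p = (if 0 \<le> p \<and> p < int (length cells) then Wk (to_nat (cells ! nat p)) else Blank)"

lemma cell_tape_Nil: "cell_tape [] = (\<lambda>_. Blank)"
  by (simp add: cell_tape_def fun_eq_iff)

lemma cell_tape_inside: "0 \<le> h \<Longrightarrow> h < int (length cells) \<Longrightarrow> cell_tape cells h \<noteq> Blank"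
  by (simp add: cell_tape_def)

lemma cell_tape_outside: "h < 0 \<or> int (length cells) \<le> h \<Longrightarrow> cell_tape cells h = Blank"
  by (auto simp: cell_tape_def)

lemma cell_tape_append: "cell_tape (xs @ y # zs) (int (length xs)) = Wk (to_nat y)"
  by (simp add: cell_tape_def)

lemma cell_tape_update:
  "(cell_tape (xs @ y # zs))(int (length xs) := Wk (to_nat y')) = cell_tape (xs @ y' # zs)"
  by (auto simp: cell_tape_def nth_append nat_less_iff fun_eq_iff)

lemma cell_tape_snoc: "(cell_tape xs)(int (length xs) := Wk (to_nat y)) = cell_tape (xs @ [y])"
  by (auto simp: cell_tape_def nth_append nat_less_iff fun_eq_iff)

section \<open>Integer encoding of a vector automaton\<close>

instance esym :: (countable) countable
  by countable_datatype

lemma UNIV_esym: "(UNIV :: 'a esym set) = insert Cent (insert Dollar (range Sym))"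
  by (auto intro: esym.exhaust)

instance esym :: (finite) finite
  by standard (simp add: UNIV_esym)

lemma dva_step_eq:
  "dva_step k A (q, v) \<sigma> = (fst (dva_delta A q \<sigma> (v 0 = 1)), vmult k v (snd (dva_delta A q \<sigma> (v 0 = 1))))"
  by (simp add: dva_step_def split: prod.splits)

locale dva_simulation =
  fixes k :: nat and A :: "('a::finite) dva"
  assumes rtDVA: "rtDVA k A"
begin

lemma k_ge_1: "1 \<le> k" and finite_states: "finite (dva_states A)"
  and init_in_states: "dva_init A \<in> dva_states A"
  and delta_in_states: "q \<in> dva_states A \<Longrightarrow> fst (dva_delta A q \<sigma> b) \<in> dva_states A"
  using rtDVA by (simp_all add: rtDVA_def)

definition m :: nat where
  "m = 2 * (k + 1)"

definition entries :: "rat set" where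
  "entries = (\<lambda>(q, \<sigma>, b, i, j). snd (dva_delta A q \<sigma> b) i j) ` (dva_states A \<times> UNIV \<times> UNIV \<times> {..<k} \<times> {..<k})
      \<union> dva_vec A ` {..<k}"

definition denom :: int where
  "denom = (\<Prod>x\<in>entries. snd (quotient_of x))"

definition scaled :: "rat \<Rightarrow> int" where
  "scaled x = \<lfloor>of_int denom * x\<rfloor>"

lemma denom_pos: "0 < denom"
  unfolding denom_def by (rule prod_pos) (metis prod.collapse quotient_of_denom_pos)

lemma scaled_entry:
  assumes "x \<in> entries"
  shows "of_int (scaled x) = of_int denom * x"
proof -
  obtain a d where ad: "quotient_of x = (a, d)" by (metis surj_pair)
  have "finite entries" unfolding entries_def using finite_states by simp
  then have "denom = d * (\<Prod>y\<in>entries - {x}. snd (quotient_of y))"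
    unfolding denom_def using prod.remove[OF _ assms, of "\<lambda>y. snd (quotient_of y)"] ad by simp
  moreover have "x = of_int a / of_int d" "d > 0"
    using ad quotient_of_div quotient_of_denom_pos by blast+
  ultimately have "of_int denom * x = of_int ((\<Prod>y\<in>entries - {x}. snd (quotient_of y)) * a)"
    by simp
  then show ?thesis unfolding scaled_def by (metis floor_of_int)
qed

definition int_matrix :: "nat \<Rightarrow> 'a esym \<Rightarrow> bool \<Rightarrow> nat \<Rightarrow> nat \<Rightarrow> int" where
  "int_matrix q \<sigma> b i j =
     (if i < k \<and> j < k then scaled (snd (dva_delta A q \<sigma> b) i j) else if i = k \<and> j = k then denom else 0)"

definition init_int :: "nat \<Rightarrow> int" where
  "init_int i = (if i < k then scaled (dva_vec A i) else if i = k then denom else 0)"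

definition nat_matrix :: "nat \<Rightarrow> 'a esym \<Rightarrow> bool \<Rightarrow> nat \<Rightarrow> nat \<Rightarrow> nat" where
  "nat_matrix q \<sigma> b = split_matrix (int_matrix q \<sigma> b)"

definition cell0 :: "nat list" where
  "cell0 = map (split_vector init_int) [0..<m]"

definition col_bound :: nat where
  "col_bound = (\<Sum>(q, \<sigma>, b) \<in> dva_states A \<times> UNIV \<times> UNIV. \<Sum>j<m. \<Sum>i<m. nat_matrix q \<sigma> b i j)"

definition base :: nat where
  "base = col_bound + (\<Sum>i<m. split_vector init_int i) + 1"

abbreviation zeros :: "nat list" where
  "zeros \<equiv> replicate m 0"

definition encodes :: "(nat \<Rightarrow> rat) \<Rightarrow> nat list list \<Rightarrow> bool" where
  "encodes v dss \<longleftrightarrow> set dss \<subseteq> vecs_below m base \<and> 0 < signed_val base dss k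
     \<and> (\<forall>i<k. v i * of_int (signed_val base dss k) = of_int (signed_val base dss i))"

lemma column_sum_le:
  assumes "q \<in> dva_states A"
  shows "\<forall>j<m. (\<Sum>i<m. nat_matrix q \<sigma> b i j) \<le> col_bound"
proof (intro allI impI)
  fix j assume "j < m"
  then have "(\<Sum>i<m. nat_matrix q \<sigma> b i j) \<le> (\<Sum>j<m. \<Sum>i<m. nat_matrix q \<sigma> b i j)"
    by (intro member_le_sum) auto
  also have "\<dots> \<le> col_bound"
    unfolding col_bound_def using assms finite_states
    by (intro member_le_sum[of "(q, \<sigma>, b)" _ "\<lambda>(q, \<sigma>, b). \<Sum>j<m. \<Sum>i<m. nat_matrix q \<sigma> b i j", simplified])
      auto
  finally show "(\<Sum>i<m. nat_matrix q \<sigma> b i j) \<le> col_bound" .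
qed

lemma col_bound_less_base: "col_bound < base"
  by (simp add: base_def)

lemma cell0_in_vecs_below: "cell0 \<in> vecs_below m base"
proof -
  have "split_vector init_int i < base" if "i < m" for i
    using member_le_sum[of i "{..<m}" "split_vector init_int"] that by (simp add: base_def)
  then show ?thesis by (auto simp: vecs_below_def cell0_def)
qed

lemma zeros_in_vecs_below: "0 < B \<Longrightarrow> zeros \<in> vecs_below m B"
  by (simp add: vecs_below_def)

lemma encodes_init: "encodes (dva_vec A) [cell0]"
proof -
  have "signed_val base [cell0] i = init_int i" if "i \<le> k" for i
    using that signed_val_split_vector[of i "k + 1"] by (simp add: cell0_def m_def)
  moreover have "dva_vec A i \<in> entries" if "i < k" for i
    using that by (simp add: entries_def)
  ultimately show ?thesis
    using cell0_in_vecs_below denom_pos scaled_entry by (simp add: encodes_def init_int_def mult.commute)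
qed

lemma encodes_step:
  assumes "encodes v dss" "q \<in> dva_states A" "set dss' \<subseteq> vecs_below m base"
    "\<And>j. j < m \<Longrightarrow> digits_val base dss' j = (\<Sum>i<m. digits_val base dss i * nat_matrix q \<sigma> b i j)"
  shows "encodes (vmult k v (snd (dva_delta A q \<sigma> b))) dss'"
proof -
  define M where "M = snd (dva_delta A q \<sigma> b)"
  define u where "u = signed_val base dss"
  have lin: "signed_val base dss' j = (\<Sum>i<k. u i * int_matrix q \<sigma> b i j) + u k * int_matrix q \<sigma> b k j"
    if "j \<le> k" for j
    using signed_val_split_matrix[of "k + 1" base dss' dss "int_matrix q \<sigma> b" j] assms(4) that
    by (simp add: m_def nat_matrix_def u_def)
  have uk: "signed_val base dss' k = u k * denom"
    using lin[of k] by (simp add: int_matrix_def)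
  have u: "0 < u k" "\<And>i. i < k \<Longrightarrow> v i * of_int (u k) = of_int (u i)"
    using assms(1) by (auto simp: encodes_def u_def)
  have "vmult k v M j * of_int (signed_val base dss' k) = of_int (signed_val base dss' j)"
    if j: "j < k" for j
  proof -
    have M: "M i j \<in> entries" if "i < k" for i
      using assms(2) that j unfolding entries_def M_def
      by (intro UnI1 image_eqI[where x = "(q, \<sigma>, b, i, j)"]) auto
    have "vmult k v M j * of_int (signed_val base dss' k)
        = (\<Sum>i<k. (v i * M i j) * (of_int (u k) * of_int denom))"
      by (simp add: vmult_def uk sum_distrib_right)
    also have "\<dots> = (\<Sum>i<k. (v i * of_int (u k)) * (of_int denom * M i j))"
      by (simp add: ac_simps)
    also have "\<dots> = (\<Sum>i<k. of_int (u i) * of_int (scaled (M i j)))"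
      using u(2) scaled_entry[OF M] by simp
    also have "\<dots> = of_int (signed_val base dss' j)"
      using lin[of j] j by (simp add: int_matrix_def M_def)
    finally show ?thesis .
  qed
  moreover have "0 < signed_val base dss' k" using uk u(1) denom_pos by simp
  ultimately show ?thesis using assms(3) by (simp add: encodes_def M_def)
qed

lemma encodes_first_entry:
  assumes "encodes v dss"
  shows "signed_val base dss 0 = signed_val base dss k \<longleftrightarrow> v 0 = 1"
proof -
  have "0 < signed_val base dss k" "v 0 * of_int (signed_val base dss k) = of_int (signed_val base dss 0)"
    using assms k_ge_1 by (auto simp: encodes_def)
  then show ?thesis by (metis mult_cancel_right1 of_int_eq_iff of_int_0 less_irrefl)
qed

lemma sweep_encodes:
  assumes "encodes v dss" "q \<in> dva_states A"
    "sweep m base k (nat_matrix q \<sigma> b) (zeros, 0, True) (dss @ [zeros]) = (out, cs', e', fl')"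
  defines "v' \<equiv> vmult k v (snd (dva_delta A q \<sigma> b))"
  shows "encodes v' out" "length out = Suc (length dss)" "(e' = 0 \<and> fl') \<longleftrightarrow> v' 0 = 1"
proof -
  have dss: "set dss \<subseteq> vecs_below m base" using assms(1) by (simp add: encodes_def)
  note mult = sweep_multiplies[OF assms(3) dss column_sum_le[OF assms(2)] col_bound_less_base]
  show "encodes v' out" unfolding v'_def by (rule encodes_step[OF assms(1,2) mult(1,3)])
  then show "(e' = 0 \<and> fl') \<longleftrightarrow> v' 0 = 1" using mult(4) encodes_first_entry by simp
  show "length out = Suc (length dss)" by (rule mult(2))
qed

end

section \<open>The simulating machine\<close>

text \<open>Sweep q \<sigma> b cs e fl multiplies the work tape by the matrix of the transition
  \<delta>(q, \<sigma>, b) with carry state (cs, e, fl); Back returns to the left end of the work tape and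
  Start reads the next input symbol.\<close>
datatype 'a ctrl = Init | Sweep nat "'a esym" bool "nat list" int bool | Back nat bool | Start nat bool
  | Acc | Rej

instance ctrl :: (countable) countable
  by countable_datatype

context dva_simulation
begin

definition cell_of :: "'a tsym \<Rightarrow> nat list" where
  "cell_of g = (case g of Wk n \<Rightarrow> from_nat n | _ \<Rightarrow> zeros)"

definition sweep_done :: "nat \<Rightarrow> 'a esym \<Rightarrow> bool \<Rightarrow> bool \<Rightarrow> 'a ctrl" where
  "sweep_done q \<sigma> b fl =
     (if \<sigma> = Dollar then if fst (dva_delta A q \<sigma> b) \<in> dva_acc A \<and> fl then Acc else Rej
      else Back (fst (dva_delta A q \<sigma> b)) fl)"

definition ctrl_step :: "'a ctrl \<Rightarrow> 'a tsym \<Rightarrow> 'a tsym \<Rightarrow> 'a ctrl \<times> 'a tsym \<times> int \<times> int" where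
  "ctrl_step s g0 g1 = (case s of
     Init \<Rightarrow> (Sweep (dva_init A) Cent (dva_vec A 0 = 1) zeros 0 True, Wk (to_nat cell0), 0, 0)
   | Sweep q \<sigma> b cs e fl \<Rightarrow>
       (case carry_step m base k (nat_matrix q \<sigma> b) (cs, e, fl) (cell_of g1) of (nd, cs', e', fl') \<Rightarrow>
         if g1 = Blank then (sweep_done q \<sigma> b (e' = 0 \<and> fl'), Wk (to_nat nd), 0, -1)
         else (Sweep q \<sigma> b cs' e' fl', Wk (to_nat nd), 0, 1))
   | Back q fl \<Rightarrow> if g1 = Blank then (Start q fl, g1, 0, 1) else (Back q fl, g1, 0, -1)
   | Start q fl \<Rightarrow> (case g0 of
       Inp a \<Rightarrow> (Sweep q (Sym a) fl zeros 0 True, g1, 1, 0)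
     | _ \<Rightarrow> (Sweep q Dollar fl zeros 0 True, g1, 0, 0))
   | _ \<Rightarrow> (Rej, g1, 0, 0))"

definition tape_alphabet :: "'a tsym set" where
  "tape_alphabet = {Blank} \<union> range Inp \<union> (\<lambda>ds. Wk (to_nat ds)) ` vecs_below m base"

definition ctrls :: "'a ctrl set" where
  "ctrls = {Init, Acc, Rej} \<union> (\<lambda>(q, fl). Start q fl) ` (dva_states A \<times> UNIV)
     \<union> (\<lambda>(q, fl). Back q fl) ` (dva_states A \<times> UNIV)
     \<union> (\<lambda>(q, \<sigma>, b, cs, e, fl). Sweep q \<sigma> b cs e fl)
         ` (dva_states A \<times> UNIV \<times> UNIV \<times> vecs_below m (Suc col_bound) \<times> {-2..2} \<times> UNIV)"

definition TM :: "'a tm" where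
  "TM = \<lparr>tm_k = 2, tm_Q = to_nat ` ctrls, tm_Gamma = tape_alphabet, tm_q0 = to_nat (Init :: 'a ctrl),
     tm_acc = to_nat (Acc :: 'a ctrl), tm_rej = to_nat (Rej :: 'a ctrl),
     tm_delta = (\<lambda>q gs. case ctrl_step (from_nat q) (gs ! 0) (gs ! 1) of
       (s', g1, d0, d1) \<Rightarrow> (to_nat s', [gs ! 0, g1], [d0, d1]))\<rparr>"

lemma cell_of_in_vecs_below: "g \<in> tape_alphabet \<Longrightarrow> cell_of g \<in> vecs_below m base"
  using zeros_in_vecs_below[of base] col_bound_less_base
  by (auto simp: tape_alphabet_def cell_of_def)

lemma ctrls_intros:
  "Init \<in> ctrls" "Acc \<in> ctrls" "Rej \<in> ctrls"
  "q \<in> dva_states A \<Longrightarrow> Start q fl \<in> ctrls" "q \<in> dva_states A \<Longrightarrow> Back q fl \<in> ctrls"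
  "q \<in> dva_states A \<Longrightarrow> cs \<in> vecs_below m (Suc col_bound) \<Longrightarrow> \<bar>e\<bar> \<le> 2 \<Longrightarrow>
     Sweep q \<sigma> b cs e fl \<in> ctrls"
  unfolding ctrls_def by (force intro: image_eqI[where x = "(q, \<sigma>, b, cs, e, fl)"])+

lemma ctrls_cases:
  assumes "s \<in> ctrls"
  obtains "s = Init" | "s = Acc \<or> s = Rej" | q fl where "q \<in> dva_states A" "s = Start q fl \<or> s = Back q fl"
    | q \<sigma> b cs e fl where "q \<in> dva_states A" "cs \<in> vecs_below m (Suc col_bound)" "\<bar>e\<bar> \<le> 2"
        "s = Sweep q \<sigma> b cs e fl"
  using assms unfolding ctrls_def by auto

lemma ctrl_step_closed:
  assumes "s \<in> ctrls" "g0 \<in> tape_alphabet" "g1 \<in> tape_alphabet" "ctrl_step s g0 g1 = (s', g1', d0, d1)"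
  shows "s' \<in> ctrls \<and> g1' \<in> tape_alphabet \<and> d0 \<in> {-1, 0, 1} \<and> d1 \<in> {-1, 0, 1}"
  using assms(1)
proof (cases rule: ctrls_cases)
  case 1
  have "zeros \<in> vecs_below m (Suc col_bound)" by (simp add: zeros_in_vecs_below)
  then show ?thesis using 1 assms(4) init_in_states cell0_in_vecs_below
    by (auto simp: ctrl_step_def tape_alphabet_def intro: ctrls_intros)
next
  case 2
  then show ?thesis using assms(3,4) by (auto simp: ctrl_step_def intro: ctrls_intros)
next
  case (3 q fl)
  have "Sweep q \<sigma> fl zeros 0 True \<in> ctrls" for \<sigma>
    using ctrls_intros(6)[OF 3(1)] by (simp add: zeros_in_vecs_below)
  then show ?thesis using 3 assms(3,4)
    by (auto simp: ctrl_step_def split: tsym.splits if_splits intro: ctrls_intros)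
next
  case (4 q \<sigma> b cs e fl)
  obtain nd cs' e' fl' where step:
    "carry_step m base k (nat_matrix q \<sigma> b) (cs, e, fl) (cell_of g1) = (nd, cs', e', fl')"
    by (metis surj_pair)
  have nd: "nd \<in> vecs_below m base" and cs': "cs' \<in> vecs_below m (Suc col_bound)"
    using carry_step_bounded[OF cell_of_in_vecs_below[OF assms(3)] 4(2) column_sum_le[OF 4(1)] _ step]
      col_bound_less_base by auto
  have "\<bar>e'\<bar> \<le> 2" using carry_step_borrow_bounded[OF step nd] 4(3) by (simp add: m_def)
  then have "Sweep q \<sigma> b cs' e' fl' \<in> ctrls" using ctrls_intros(6) 4(1) cs' by simp
  moreover have "sweep_done q \<sigma> b fl'' \<in> ctrls" for fl''
    using delta_in_states[OF 4(1)] by (simp add: sweep_done_def ctrls_intros)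
  ultimately show ?thesis using assms(4) 4(4) step nd
    by (auto simp: ctrl_step_def tape_alphabet_def split: if_splits)
qed

lemma TM_wf: "tm_wf TM"
proof -
  have "case tm_delta TM q gs of (q', ws, ds) \<Rightarrow> q' \<in> tm_Q TM \<and> length ws = tm_k TM
      \<and> set ws \<subseteq> tm_Gamma TM \<and> length ds = tm_k TM \<and> set ds \<subseteq> {-1, 0, 1}"
    if q: "q \<in> tm_Q TM" and gs: "length gs = tm_k TM" "set gs \<subseteq> tm_Gamma TM" for q gs
  proof -
    obtain s where s: "s \<in> ctrls" "q = to_nat s" using q by (auto simp: TM_def)
    have g: "gs ! 0 \<in> tape_alphabet" "gs ! 1 \<in> tape_alphabet" using gs by (auto simp: TM_def)
    obtain s' g1 d0 d1 where step: "ctrl_step s (gs ! 0) (gs ! 1) = (s', g1, d0, d1)"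
      by (metis surj_pair)
    show ?thesis using ctrl_step_closed[OF s(1) g step] step s g by (auto simp: TM_def)
  qed
  moreover have "finite ctrls" unfolding ctrls_def using finite_states finite_vecs_below by simp
  moreover have "finite tape_alphabet" unfolding tape_alphabet_def using finite_vecs_below by simp
  moreover have "Blank \<in> tape_alphabet" "range Inp \<subseteq> tape_alphabet" by (auto simp: tape_alphabet_def)
  ultimately show ?thesis unfolding tm_wf_def by (simp add: TM_def ctrls_intros)
qed


definition cfg :: "'a ctrl \<Rightarrow> 'a list \<Rightarrow> nat list list \<Rightarrow> int \<Rightarrow> int \<Rightarrow> 'a tm_config" where
  "cfg s w cells h0 h1 = (to_nat s, [input_tape w, cell_tape cells], [h0, h1])"

lemma heads_within_cfg [simp]: "heads_within H0 H1 (cfg s w cells h0 h1) \<longleftrightarrow> h0 \<in> H0 \<and> h1 \<in> H1"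
  by (simp add: heads_within_def cfg_def)

lemma tm_init_TM: "tm_init TM w = cfg Init w [] 0 0"
  by (simp add: tm_init_def TM_def cfg_def input_tape_def cell_tape_Nil numeral_2_eq_2 fun_eq_iff)

lemma tm_step_cfg:
  assumes "s \<noteq> Acc" "s \<noteq> Rej"
  shows "tm_step TM (cfg s w cells h0 h1) =
    (case ctrl_step s (input_tape w h0) (cell_tape cells h1) of (s', g1, d0, d1) \<Rightarrow>
       (to_nat s', [input_tape w, (cell_tape cells)(h1 := g1)], [h0 + d0, h1 + d1]))"
proof -
  have "[0..<2] = [0, 1::nat]" by (simp add: upt_rec)
  then show ?thesis using assms by (auto simp: tm_step_def TM_def cfg_def split: prod.splits)
qed

lemma step_init:
  "tm_step TM (cfg Init w [] 0 0) = cfg (Sweep (dva_init A) Cent (dva_vec A 0 = 1) zeros 0 True) w [cell0] 0 0"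
  using cell_tape_snoc[of "[]" cell0] by (subst tm_step_cfg) (simp_all add: ctrl_step_def cfg_def)

lemma step_sweep_cell:
  assumes "carry_step m base k (nat_matrix q \<sigma> b) (cs, e, fl) ds = (nd, cs', e', fl')"
  shows "tm_step TM (cfg (Sweep q \<sigma> b cs e fl) w (dn @ ds # rest) h0 (int (length dn)))
    = cfg (Sweep q \<sigma> b cs' e' fl') w (dn @ nd # rest) h0 (int (length dn) + 1)"
  using assms
  by (subst tm_step_cfg) (simp_all add: ctrl_step_def cell_of_def cell_tape_append cell_tape_update cfg_def)

lemma step_sweep_end:
  assumes "carry_step m base k (nat_matrix q \<sigma> b) (cs, e, fl) zeros = (nd, cs', e', fl')"
  shows "tm_step TM (cfg (Sweep q \<sigma> b cs e fl) w cells h0 (int (length cells)))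
    = cfg (sweep_done q \<sigma> b (e' = 0 \<and> fl')) w (cells @ [nd]) h0 (int (length cells) - 1)"
  using assms
  by (subst tm_step_cfg) (simp_all add: ctrl_step_def cell_of_def cell_tape_outside cell_tape_snoc cfg_def)

lemma step_back_cell:
  "0 \<le> h \<Longrightarrow> h < int (length cells) \<Longrightarrow>
    tm_step TM (cfg (Back q fl) w cells h0 h) = cfg (Back q fl) w cells h0 (h - 1)"
  by (subst tm_step_cfg) (simp_all add: ctrl_step_def cell_tape_inside cfg_def)

lemma step_back_end: "tm_step TM (cfg (Back q fl) w cells h0 (-1)) = cfg (Start q fl) w cells h0 0"
  by (subst tm_step_cfg) (simp_all add: ctrl_step_def cell_tape_outside fun_upd_idem_iff cfg_def)

lemma step_start_symbol:
  "pos < length w \<Longrightarrow> tm_step TM (cfg (Start q fl) w cells (int pos) 0)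
    = cfg (Sweep q (Sym (w ! pos)) fl zeros 0 True) w cells (int pos + 1) 0"
  by (subst tm_step_cfg) (simp_all add: ctrl_step_def input_tape_def cfg_def)

lemma step_start_end:
  "tm_step TM (cfg (Start q fl) w cells (int (length w)) 0)
    = cfg (Sweep q Dollar fl zeros 0 True) w cells (int (length w)) 0"
  by (subst tm_step_cfg) (simp_all add: ctrl_step_def input_tape_def cfg_def)


lemma run_sweep:
  assumes "sweep m base k (nat_matrix q \<sigma> b) (cs, e, fl) rest = (out, cs', e', fl')"
  shows "run_within (tm_step TM) (heads_within {h0} {0..int (length dn + length rest)}) (length rest)
    (cfg (Sweep q \<sigma> b cs e fl) w (dn @ rest @ zs) h0 (int (length dn)))
    (cfg (Sweep q \<sigma> b cs' e' fl') w (dn @ out @ zs) h0 (int (length dn + length rest)))"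
  using assms
proof (induction rest arbitrary: dn cs e fl out)
  case Nil
  then show ?case by (simp add: run_within_0)
next
  case (Cons ds rest)
  obtain nd cs1 e1 fl1 out1 where step: "carry_step m base k (nat_matrix q \<sigma> b) (cs, e, fl) ds = (nd, cs1, e1, fl1)"
    and rest: "sweep m base k (nat_matrix q \<sigma> b) (cs1, e1, fl1) rest = (out1, cs', e', fl')"
    and out: "out = nd # out1"
    using Cons.prems by (elim sweep_ConsE) auto
  have IH: "run_within (tm_step TM) (heads_within {h0} {0..int (length (dn @ [nd]) + length rest)})
      (length rest) (cfg (Sweep q \<sigma> b cs1 e1 fl1) w ((dn @ [nd]) @ rest @ zs) h0 (int (length (dn @ [nd]))))
      (cfg (Sweep q \<sigma> b cs' e' fl') w ((dn @ [nd]) @ out1 @ zs) h0 (int (length (dn @ [nd]) + length rest)))"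
    by (rule Cons.IH[OF rest])
  have eqs: "length (dn @ [nd]) + length rest = length dn + length (ds # rest)"
    "(dn @ [nd]) @ out1 @ zs = dn @ out @ zs"
    "tm_step TM (cfg (Sweep q \<sigma> b cs e fl) w (dn @ (ds # rest) @ zs) h0 (int (length dn)))
      = cfg (Sweep q \<sigma> b cs1 e1 fl1) w ((dn @ [nd]) @ rest @ zs) h0 (int (length (dn @ [nd])))"
    using step_sweep_cell[OF step, of w dn "rest @ zs" h0] out by (simp_all add: add.commute)
  have "run_within (tm_step TM) (heads_within {h0} {0..int (length dn + length (ds # rest))})
      (Suc (length rest)) (cfg (Sweep q \<sigma> b cs e fl) w (dn @ (ds # rest) @ zs) h0 (int (length dn)))
      (cfg (Sweep q \<sigma> b cs' e' fl') w (dn @ out @ zs) h0 (int (length dn + length (ds # rest))))"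
    by (rule run_within_Suc) (simp, simp only: eqs(3) IH[unfolded eqs(1,2)])
  then show ?case by (simp only: length_Cons)
qed

lemma run_multiply:
  fixes \<sigma> :: "'a esym" and b :: bool
  assumes "encodes v cells" "q \<in> dva_states A"
  defines "v' \<equiv> vmult k v (snd (dva_delta A q \<sigma> b))"
  shows "\<exists>cells'. encodes v' cells' \<and> length cells' = Suc (length cells) \<and>
    run_within (tm_step TM) (heads_within {h0} {-1..int (length cells)}) (Suc (length cells))
      (cfg (Sweep q \<sigma> b zeros 0 True) w cells h0 0)
      (cfg (sweep_done q \<sigma> b (v' 0 = 1)) w cells' h0 (int (length cells) - 1))"
proof -
  obtain out cs e fl where sw: "sweep m base k (nat_matrix q \<sigma> b) (zeros, 0, True) cells = (out, cs, e, fl)"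
    by (metis surj_pair)
  obtain nd cs' e' fl' where last: "carry_step m base k (nat_matrix q \<sigma> b) (cs, e, fl) zeros = (nd, cs', e', fl')"
    by (metis surj_pair)
  have "sweep m base k (nat_matrix q \<sigma> b) (zeros, 0, True) (cells @ [zeros]) = (out @ [nd], cs', e', fl')"
    using sw last by (simp add: sweep_snoc)
  note enc = sweep_encodes[OF assms(1,2) this, folded v'_def]
  have "run_within (tm_step TM) (heads_within {h0} {0..int (length cells)}) (length cells)
      (cfg (Sweep q \<sigma> b zeros 0 True) w cells h0 0) (cfg (Sweep q \<sigma> b cs e fl) w out h0 (int (length cells)))"
    using run_sweep[OF sw, where dn = "[]" and zs = "[]"] by simp
  then have sweep: "run_within (tm_step TM) (heads_within {h0} {-1..int (length cells)}) (length cells)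
      (cfg (Sweep q \<sigma> b zeros 0 True) w cells h0 0) (cfg (Sweep q \<sigma> b cs e fl) w out h0 (int (length cells)))"
    by (rule run_within_mono) (auto elim: heads_within_mono)
  have "length out = length cells" using enc(2) by simp
  then have "run_within (tm_step TM) (heads_within {h0} {-1..int (length cells)}) (Suc 0)
      (cfg (Sweep q \<sigma> b cs e fl) w out h0 (int (length cells)))
      (cfg (sweep_done q \<sigma> b (v' 0 = 1)) w (out @ [nd]) h0 (int (length cells) - 1))"
    using step_sweep_end[OF last, where cells = out] enc(3) by (intro run_within_step) simp_all
  from run_within_add[OF sweep this] show ?thesis using enc(1,2) by auto
qed

lemma run_back:
  "j \<le> length cells \<Longrightarrow> run_within (tm_step TM) (heads_within {h0} {-1..int j}) (Suc j)
     (cfg (Back q fl) w cells h0 (int j - 1)) (cfg (Start q fl) w cells h0 0)"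
proof (induction j)
  case 0
  then show ?case by (intro run_within_step) (simp_all add: step_back_end)
next
  case (Suc j)
  then have "run_within (tm_step TM) (heads_within {h0} {-1..int j}) (Suc j)
      (cfg (Back q fl) w cells h0 (int j - 1)) (cfg (Start q fl) w cells h0 0)"
    by simp
  then have ret: "run_within (tm_step TM) (heads_within {h0} {-1..int (Suc j)}) (Suc j)
      (cfg (Back q fl) w cells h0 (int j - 1)) (cfg (Start q fl) w cells h0 0)"
    by (rule run_within_mono) (auto elim: heads_within_mono)
  have step: "tm_step TM (cfg (Back q fl) w cells h0 (int (Suc j) - 1)) = cfg (Back q fl) w cells h0 (int j - 1)"
    using Suc.prems by (simp add: step_back_cell)
  show ?case by (rule run_within_Suc) (use ret step in simp_all)
qed


lemma run_transition:
  fixes \<sigma> :: "'a esym" and b :: bool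
  assumes "encodes v cells" "q \<in> dva_states A" "\<sigma> \<noteq> Dollar"
  defines "v' \<equiv> vmult k v (snd (dva_delta A q \<sigma> b))"
  shows "\<exists>cells'. encodes v' cells' \<and> length cells' = Suc (length cells) \<and>
    run_within (tm_step TM) (heads_within {h0} {-1..int (length cells)}) (2 * length cells + 2)
      (cfg (Sweep q \<sigma> b zeros 0 True) w cells h0 0)
      (cfg (Start (fst (dva_delta A q \<sigma> b)) (v' 0 = 1)) w cells' h0 0)"
proof -
  obtain cells' where enc: "encodes v' cells'" "length cells' = Suc (length cells)" and
    update: "run_within (tm_step TM) (heads_within {h0} {-1..int (length cells)}) (Suc (length cells))
      (cfg (Sweep q \<sigma> b zeros 0 True) w cells h0 0)
      (cfg (sweep_done q \<sigma> b (v' 0 = 1)) w cells' h0 (int (length cells) - 1))"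
    using run_multiply[OF assms(1,2), of \<sigma> b h0 w] unfolding v'_def by blast
  have "run_within (tm_step TM) (heads_within {h0} {-1..int (length cells)}) (Suc (length cells))
      (cfg (sweep_done q \<sigma> b (v' 0 = 1)) w cells' h0 (int (length cells) - 1))
      (cfg (Start (fst (dva_delta A q \<sigma> b)) (v' 0 = 1)) w cells' h0 0)"
    using run_back[of "length cells" cells'] enc(2) assms(3) by (simp add: sweep_done_def)
  from run_within_add[OF update this] show ?thesis
    using enc by (auto simp: mult_2 intro!: exI[of _ cells'])
qed

definition accepts_from :: "nat \<Rightarrow> (nat \<Rightarrow> rat) \<Rightarrow> 'a list \<Rightarrow> bool" where
  "accepts_from q v r \<longleftrightarrow>
     (let c = foldl (dva_step k A) (q, v) (map Sym r @ [Dollar]) in fst c \<in> dva_acc A \<and> snd c 0 = 1)"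

lemma accepts_from_Nil:
  "accepts_from q v [] \<longleftrightarrow> fst (dva_delta A q Dollar (v 0 = 1)) \<in> dva_acc A
     \<and> vmult k v (snd (dva_delta A q Dollar (v 0 = 1))) 0 = 1"
  by (simp add: accepts_from_def dva_step_eq)

lemma accepts_from_Cons:
  "accepts_from q v (a # r) = accepts_from (fst (dva_delta A q (Sym a) (v 0 = 1)))
     (vmult k v (snd (dva_delta A q (Sym a) (v 0 = 1)))) r"
  by (simp add: accepts_from_def dva_step_eq)

lemma run_end:
  assumes "encodes v cells" "q \<in> dva_states A"
  shows "\<exists>cells' h. run_within (tm_step TM) (heads_within {int (length w)} {-1..int (length cells)})
    (Suc (Suc (length cells))) (cfg (Start q (v 0 = 1)) w cells (int (length w)) 0)
    (cfg (if accepts_from q v [] then Acc else Rej) w cells' (int (length w)) h)"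
proof -
  define v' where "v' = vmult k v (snd (dva_delta A q Dollar (v 0 = 1)))"
  obtain cells' where update: "run_within (tm_step TM) (heads_within {int (length w)} {-1..int (length cells)})
      (Suc (length cells)) (cfg (Sweep q Dollar (v 0 = 1) zeros 0 True) w cells (int (length w)) 0)
      (cfg (sweep_done q Dollar (v 0 = 1) (v' 0 = 1)) w cells' (int (length w)) (int (length cells) - 1))"
    using run_multiply[OF assms] unfolding v'_def by blast
  have "run_within (tm_step TM) (heads_within {int (length w)} {-1..int (length cells)})
      (Suc (Suc (length cells))) (cfg (Start q (v 0 = 1)) w cells (int (length w)) 0)
      (cfg (sweep_done q Dollar (v 0 = 1) (v' 0 = 1)) w cells' (int (length w)) (int (length cells) - 1))"
    by (rule run_within_Suc) (use update step_start_end in simp_all)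
  moreover have "sweep_done q Dollar (v 0 = 1) (v' 0 = 1) = (if accepts_from q v [] then Acc else Rej)"
    by (simp add: sweep_done_def accepts_from_Nil v'_def)
  ultimately show ?thesis by (intro exI[of _ cells'] exI[of _ "int (length cells) - 1"]) simp
qed

lemma run_symbol:
  assumes "encodes v cells" "q \<in> dva_states A" "pos < length w"
  defines "q' \<equiv> fst (dva_delta A q (Sym (w ! pos)) (v 0 = 1))"
    and "v' \<equiv> vmult k v (snd (dva_delta A q (Sym (w ! pos)) (v 0 = 1)))"
  shows "\<exists>cells'. encodes v' cells' \<and> length cells' = Suc (length cells) \<and>
    run_within (tm_step TM) (heads_within {int pos..int (Suc pos)} {-1..int (length cells)})
      (Suc (2 * length cells + 2)) (cfg (Start q (v 0 = 1)) w cells (int pos) 0)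
      (cfg (Start q' (v' 0 = 1)) w cells' (int (Suc pos)) 0)"
proof -
  obtain cells' where enc: "encodes v' cells'" "length cells' = Suc (length cells)" and
    trans: "run_within (tm_step TM) (heads_within {int (Suc pos)} {-1..int (length cells)})
      (2 * length cells + 2) (cfg (Sweep q (Sym (w ! pos)) (v 0 = 1) zeros 0 True) w cells (int (Suc pos)) 0)
      (cfg (Start q' (v' 0 = 1)) w cells' (int (Suc pos)) 0)"
    using run_transition[OF assms(1,2)] unfolding q'_def v'_def by blast
  have trans': "run_within (tm_step TM) (heads_within {int pos..int (Suc pos)} {-1..int (length cells)})
      (2 * length cells + 2) (cfg (Sweep q (Sym (w ! pos)) (v 0 = 1) zeros 0 True) w cells (int (Suc pos)) 0)
      (cfg (Start q' (v' 0 = 1)) w cells' (int (Suc pos)) 0)"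
    using trans by (elim run_within_heads_mono) auto
  have step: "tm_step TM (cfg (Start q (v 0 = 1)) w cells (int pos) 0)
      = cfg (Sweep q (Sym (w ! pos)) (v 0 = 1) zeros 0 True) w cells (int (Suc pos)) 0"
    using step_start_symbol[OF assms(3)] by (simp add: add.commute)
  have "run_within (tm_step TM) (heads_within {int pos..int (Suc pos)} {-1..int (length cells)})
      (Suc (2 * length cells + 2)) (cfg (Start q (v 0 = 1)) w cells (int pos) 0)
      (cfg (Start q' (v' 0 = 1)) w cells' (int (Suc pos)) 0)"
    by (rule run_within_Suc) (use trans' step in simp_all)
  then show ?thesis using enc by blast
qed

lemma suffix_time_Suc:
  fixes t d L :: nat
  assumes "t \<le> (d + 1) * (2 * (Suc L + d) + 3)"
  shows "Suc (2 * L + 2) + t \<le> (Suc d + 1) * (2 * (L + Suc d) + 3)"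
proof -
  define X where "X = (d + 1) * (2 * (Suc L + d) + 3)"
  have eq: "(Suc d + 1) * (2 * (L + Suc d) + 3) = X + (2 * (L + Suc d) + 3)"
    by (simp add: X_def)
  have "Suc (2 * L + 2) + t \<le> X + (2 * (L + Suc d) + 3)"
    using assms[folded X_def] by simp
  then show ?thesis unfolding eq .
qed

lemma run_suffix:
  assumes "encodes v cells" "q \<in> dva_states A" "d + pos = length w" "length cells + d \<le> length w + 2"
  shows "\<exists>t c. t \<le> (d + 1) * (2 * (length cells + d) + 3) \<and>
    run_within (tm_step TM) (heads_within {0..int (length w)} {-1..int (length w) + 2}) t
      (cfg (Start q (v 0 = 1)) w cells (int pos) 0) c \<and>
    fst c = to_nat (if accepts_from q v (drop pos w) then Acc else Rej :: 'a ctrl)"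
  using assms
proof (induction d arbitrary: pos q v cells)
  case 0
  then have pos: "pos = length w" by simp
  obtain cells' h where "run_within (tm_step TM) (heads_within {int (length w)} {-1..int (length cells)})
      (Suc (Suc (length cells))) (cfg (Start q (v 0 = 1)) w cells (int (length w)) 0)
      (cfg (if accepts_from q v [] then Acc else Rej) w cells' (int (length w)) h)"
    using run_end[OF "0.prems"(1,2)] by blast
  then have "run_within (tm_step TM) (heads_within {int (length w)} {-1..int (length cells)})
      (Suc (Suc (length cells))) (cfg (Start q (v 0 = 1)) w cells (int pos) 0)
      (cfg (if accepts_from q v (drop pos w) then Acc else Rej) w cells' (int (length w)) h)"
    by (simp add: pos)
  then have "run_within (tm_step TM) (heads_within {0..int (length w)} {-1..int (length w) + 2})
      (Suc (Suc (length cells))) (cfg (Start q (v 0 = 1)) w cells (int pos) 0)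
      (cfg (if accepts_from q v (drop pos w) then Acc else Rej) w cells' (int (length w)) h)"
    using "0.prems"(3,4) by (elim run_within_heads_mono) auto
  then show ?case by (intro exI conjI) (auto simp: cfg_def)
next
  case (Suc d)
  have pos: "pos < length w" using Suc.prems(3) by simp
  define q' where "q' = fst (dva_delta A q (Sym (w ! pos)) (v 0 = 1))"
  define v' where "v' = vmult k v (snd (dva_delta A q (Sym (w ! pos)) (v 0 = 1)))"
  obtain cells' where enc: "encodes v' cells'" "length cells' = Suc (length cells)" and
    first: "run_within (tm_step TM) (heads_within {int pos..int (Suc pos)} {-1..int (length cells)})
      (Suc (2 * length cells + 2)) (cfg (Start q (v 0 = 1)) w cells (int pos) 0)
      (cfg (Start q' (v' 0 = 1)) w cells' (int (Suc pos)) 0)"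
    using run_symbol[OF Suc.prems(1,2) pos] unfolding q'_def v'_def by blast
  have "q' \<in> dva_states A" using delta_in_states[OF Suc.prems(2)] by (simp add: q'_def)
  moreover have "d + Suc pos = length w" "length cells' + d \<le> length w + 2"
    using Suc.prems(3,4) enc(2) by simp_all
  ultimately obtain t c where t: "t \<le> (d + 1) * (2 * (length cells' + d) + 3)" and
    rest: "run_within (tm_step TM) (heads_within {0..int (length w)} {-1..int (length w) + 2}) t
      (cfg (Start q' (v' 0 = 1)) w cells' (int (Suc pos)) 0) c" and
    acc: "fst c = to_nat (if accepts_from q' v' (drop (Suc pos) w) then Acc else Rej :: 'a ctrl)"
    using Suc.IH[OF enc(1)] by blast
  have "run_within (tm_step TM) (heads_within {0..int (length w)} {-1..int (length w) + 2})
      (Suc (2 * length cells + 2)) (cfg (Start q (v 0 = 1)) w cells (int pos) 0)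
      (cfg (Start q' (v' 0 = 1)) w cells' (int (Suc pos)) 0)"
    using first Suc.prems(3,4) by (elim run_within_heads_mono) auto
  note run = run_within_add[OF this rest]
  have "drop pos w = w ! pos # drop (Suc pos) w" by (simp add: Cons_nth_drop_Suc pos)
  then have "accepts_from q v (drop pos w) = accepts_from q' v' (drop (Suc pos) w)"
    by (simp add: accepts_from_Cons q'_def v'_def)
  moreover have "Suc (2 * length cells + 2) + t \<le> (Suc d + 1) * (2 * (length cells + Suc d) + 3)"
    using suffix_time_Suc[of t d "length cells"] t enc(2) by simp
  ultimately show ?case using run acc by (intro exI conjI) auto
qed

lemma cubic_time_bound: "(n + 1) * (2 * (2 + n) + 3) + 5 \<le> 12 * n ^ 3 + (12::nat)"
proof -
  have "n ^ 2 \<le> n ^ 3" by (cases n) (simp_all add: power_increasing)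
  moreover have "n \<le> n ^ 3" by (cases n) (simp_all add: power_increasing[of 1 3, simplified])
  moreover have "(n + 1) * (2 * (2 + n) + 3) = 2 * n ^ 2 + 9 * n + 7"
    by (simp add: algebra_simps power2_eq_square)
  ultimately show ?thesis by linarith
qed

lemma dva_lang_iff_accepts_from:
  "dva_step k A (dva_init A, dva_vec A) Cent = (q1, v1) \<Longrightarrow> w \<in> dva_lang k A \<longleftrightarrow> accepts_from q1 v1 w"
  by (simp add: accepts_from_def dva_lang_def dva_run_def Let_def)

lemma run_init:
  assumes "dva_step k A (dva_init A, dva_vec A) Cent = (q1, v1)"
  shows "\<exists>cells. encodes v1 cells \<and> length cells = 2 \<and>
    run_within (tm_step TM) (heads_within {0..int (length w)} {-1..int (length w) + 2}) (Suc 4)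
      (tm_init TM w) (cfg (Start q1 (v1 0 = 1)) w cells 0 0)"
proof -
  define b where "b = (dva_vec A 0 = 1)"
  obtain cells where enc: "encodes v1 cells" "length cells = 2" and
    trans: "run_within (tm_step TM) (heads_within {0} {-1..1}) 4
      (cfg (Sweep (dva_init A) Cent b zeros 0 True) w [cell0] 0 0) (cfg (Start q1 (v1 0 = 1)) w cells 0 0)"
    using run_transition[OF encodes_init init_in_states, of Cent b 0 w] assms
    by (auto simp: dva_step_eq b_def)
  have "run_within (tm_step TM) (heads_within {0..int (length w)} {-1..int (length w) + 2}) 4
      (cfg (Sweep (dva_init A) Cent b zeros 0 True) w [cell0] 0 0) (cfg (Start q1 (v1 0 = 1)) w cells 0 0)"
    using trans by (elim run_within_heads_mono) auto
  then show ?thesis using enc unfolding tm_init_TM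
    by (intro exI[of _ cells] conjI run_within_Suc) (simp_all add: step_init b_def)
qed

lemma TM_decides_dva_lang:
  "tm_decides_within TM (dva_lang k A) (\<lambda>n. 12 * n ^ 3 + 12) (\<lambda>n. 12 * n + 12)"
  unfolding tm_decides_within_def
proof
  fix w :: "'a list"
  define n where "n = length w"
  let ?P = "heads_within {0..int n} {-1..int n + 2}"
  obtain q1 v1 where init: "dva_step k A (dva_init A, dva_vec A) Cent = (q1, v1)" by (metis surj_pair)
  then obtain cells where enc: "encodes v1 cells" "length cells = 2" and
    start: "run_within (tm_step TM) ?P (Suc 4) (tm_init TM w) (cfg (Start q1 (v1 0 = 1)) w cells 0 0)"
    using run_init unfolding n_def by blast
  have "q1 \<in> dva_states A" using init delta_in_states[OF init_in_states] by (auto simp: dva_step_eq)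
  then obtain t c where t: "t \<le> (n + 1) * (2 * (2 + n) + 3)" and
    rest: "run_within (tm_step TM) ?P t (cfg (Start q1 (v1 0 = 1)) w cells 0 0) c" and
    acc: "fst c = to_nat (if w \<in> dva_lang k A then Acc else Rej :: 'a ctrl)"
    using run_suffix[OF enc(1), of q1 n 0 w] enc(2) dva_lang_iff_accepts_from[OF init] by (auto simp: n_def)
  have run: "tm_cfg TM w (5 + t) = c" "\<forall>s\<le>5 + t. ?P (tm_cfg TM w s)"
    using run_within_add[OF start rest] by (simp_all add: run_within_def tm_cfg_def)
  moreover have "5 + t \<le> 12 * n ^ 3 + 12" using t cubic_time_bound[of n] by linarith
  moreover have "card {(i, snd (snd (tm_cfg TM w s)) ! i) | s i. s \<le> 5 + t \<and> i < tm_k TM} \<le> 12 * n + 12"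
    using card_visited_le[of TM "5 + t", OF _ run(2)] by (simp add: TM_def)
  ultimately show "\<exists>t. t \<le> 12 * length w ^ 3 + 12 \<and> fst (tm_cfg TM w t) \<in> {tm_acc TM, tm_rej TM}
      \<and> (fst (tm_cfg TM w t) = tm_acc TM) = (w \<in> dva_lang k A)
      \<and> card {(i, snd (snd (tm_cfg TM w s)) ! i) | s i. s \<le> t \<and> i < tm_k TM} \<le> 12 * length w + 12"
    using acc by (intro exI[of _ "5 + t"]) (auto simp: TM_def n_def)
qed

end

theorem theorem8:
  shows "(\<Union>k\<in>{1..}. (rtDVA_langs k :: ('a::finite) list set set)) \<subseteq> TISP (\<lambda>n. n ^ 3) (\<lambda>n. n)"
proof
  fix L :: "'a list set"
  assume "L \<in> (\<Union>k\<in>{1..}. rtDVA_langs k)"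
  then obtain k A where A: "rtDVA k A" "dva_lang k A = L" by (auto simp: rtDVA_langs_def)
  interpret dva_simulation k A by standard (rule A(1))
  show "L \<in> TISP (\<lambda>n. n ^ 3) (\<lambda>n. n)"
    unfolding TISP_def using TM_wf TM_decides_dva_lang A(2) by blast
qed

end
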